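(* For each $l\in\{0,\dots,d-1\}$, writing $\varepsilon_{N,l}=q^{-dN-l}$, one has \[\lim_{N\to\infty} f^{-N}\sqrt{D}\,\Lambda_{\varepsilon_{N,l}}(f)=\mathfrak a_{d-1-l},\] where the convergence is in the Hausdorff metric on subsets of $k_\infty$ and $\mathfrak a_{d-1-l}=(f,fT,\dots,fT^{d-1-l})\subset A_{\infty_1}$.
   Context: Let $q$ be a power of a prime, $k=\mathbb F_q(T)$, $A=\mathbb F_q[T]$, $k_\infty=\mathbb F_q((1/T))$ with absolute value $|x|=q^{\deg_T x}$ (i.e. $q^{-v_\infty(x)}$). For $x\in k_\infty$ let $\|x\|$ be the distance from $x$ to the nearest element of $A$. For $f\in k_\infty$ and $\varepsilon>0$ let $\Lambda_\varepsilon(f)=\{\lambda\in A:\|\lambda f\|<\varepsilon\}$ (an $\mathbb F_q$-vector space). Let $f\in k_\infty\setminus k$ be a quadratic unit: $f$ is a root of $X^2-aX-b$ with $a\in A$ monic, $d:=\deg_T a\ge 1$, $b\in\mathbb F_q^*$, and $f$ is the root with $|f|=q^d$ (the conjugate $f^*$ has $|f^*|=q^{-d}$). Let $D=a^2+4b$, with $\sqrt D$ chosen so that $f=(a+\sqrt D)/2$ if the characteristic is odd, and $\sqrt D=a$ in characteristic $2$. Let $K=k(f)\subset k_\infty$, let $\infty_1$ be the place of $K$ induced by the embedding $K\subset k_\infty$ (so $v_{\infty_1}(f)=-d$), and let $A_{\infty_1}$ be the ring of elements of $K$ regular away from $\infty_1$; one has $A_{\infty_1}=\mathbb F_q[f,fT,\dots,fT^{d-1}]$.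 For $0\le i\le d-1$, $\mathfrak a_i$ denotes the ideal $(f,fT,\dots,fT^i)$ of $A_{\infty_1}$. *)

theory Defs
  imports "HOL-Computational_Algebra.Computational_Algebra" "HOL-Library.Extended_Real" "HOL-Library.Cardinality"
begin

text \<open>Model of k_infinity = F_q((1/T)): the type 'a fls of formal Laurent series in X
 (finitely many negative powers) with X = 1/T.  Thus T = fls_X_inv, and
 the coefficient x $$ n is the coefficient of T^(-n).  The finite field F_q is a
 finite field type 'a, q = CARD('a).\<close>

definition absv :: "'a::{field,finite} fls \<Rightarrow> real" where
  "absv x = (if x = 0 then 0 else real CARD('a) powr (- of_int (fls_subdegree x)))"

definition poly_to_fls :: "'a::{field,finite} poly \<Rightarrow> 'a fls" where
  "poly_to_fls p = (\<Sum>i\<le>degree p. fls_const (coeff p i) * fls_X_inv ^ i)"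

definition A_set :: "'a::{field,finite} fls set" where
  "A_set = range poly_to_fls"

definition k_set :: "'a::{field,finite} fls set" where
  "k_set = {poly_to_fls p / poly_to_fls r | p r. r \<noteq> 0}"

definition dist_A :: "'a::{field,finite} fls \<Rightarrow> real" where
  "dist_A x = Inf ((\<lambda>a. absv (x - a)) ` A_set)"

definition Lambda :: "real \<Rightarrow> 'a::{field,finite} fls \<Rightarrow> 'a fls set" where
  "Lambda \<epsilon> f = {lam \<in> A_set. dist_A (lam * f) < \<epsilon>}"

text \<open>sqrt D: in odd characteristic chosen so that f = (a + sqrt D)/2, i.e. sqrt D = 2f - a;
  in characteristic 2, sqrt D = a.\<close>
definition sqrtD :: "'a::{field,finite} fls \<Rightarrow> 'a poly \<Rightarrow> 'a fls" where
  "sqrtD f a = (if CHAR('a) = 2 then poly_to_fls a else 2 * f - poly_to_fls a)"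

inductive_set A_inf1 :: "'a::{field,finite} fls \<Rightarrow> nat \<Rightarrow> 'a fls set"
  for f :: "'a fls" and d :: nat where
  const: "fls_const c \<in> A_inf1 f d"
| gen: "j < d \<Longrightarrow> f * fls_X_inv ^ j \<in> A_inf1 f d"
| add: "x \<in> A_inf1 f d \<Longrightarrow> y \<in> A_inf1 f d \<Longrightarrow> x + y \<in> A_inf1 f d"
| mult: "x \<in> A_inf1 f d \<Longrightarrow> y \<in> A_inf1 f d \<Longrightarrow> x * y \<in> A_inf1 f d"

definition ideal_a :: "'a::{field,finite} fls \<Rightarrow> nat \<Rightarrow> nat \<Rightarrow> 'a fls set" where
  "ideal_a f d i = {(\<Sum>j\<le>i. r j * (f * fls_X_inv ^ j)) | r. \<forall>j\<le>i. r j \<in> A_inf1 f d}"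

definition hausdorff_dist :: "'a::{field,finite} fls set \<Rightarrow> 'a fls set \<Rightarrow> ereal" where
  "hausdorff_dist S S' = max (SUP x\<in>S. INF y\<in>S'. ereal (absv (x - y)))
                            (SUP y\<in>S'. INF x\<in>S. ereal (absv (x - y)))"

end

theory Submission
  imports Defs
begin

unbundle fps_syntax

text \<open>
  Write $f^* = a - f$ for the conjugate of $f$, so that $f f^* = -b$ and $v(f^*) = d$, where $v$
  is the valuation of $k_\infty$.  The conjugate $u + v f^*$ of $u + v f \in A[f]$ measures
  $u + v f$ at the second place above $\infty$.  Hence $A_{\infty_1}$ consists of the elements
  of $A[f]$ whose conjugate has valuation $\ge 0$, and $\mathfrak a_{d-1-l}$ of those whose
  conjugate has valuation $\ge l + 1$.  The inclusions $\supseteq$ are proved by descent: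
  subtracting a suitable $c + r f$ ($c \in \mathbb F_q$, $\deg r < d$) makes the conjugate
  divisible by $f^*$, so the element is $c + r f + z f$ with $z$ of the same kind and of
  smaller degree.

  If $\lambda \in \Lambda_\varepsilon(f)$ with $\varepsilon = q^{-dN-l}$, then
  $\delta = \lambda f - \mu$ has valuation $> dN + l$ for some $\mu \in A$, and
  $\sqrt D \lambda = \delta - \delta^*$.  So $f^{-N} \sqrt D \lambda$ is within
  $|f^{-N} \delta| \le q^{-N}$ of $-f^{-N} \delta^*$, whose conjugate $-f^{*-N} \delta$ has
  valuation $> l$.  Read backwards from an element of the ideal, the same identity gives the
  other half of the Hausdorff estimate.
\<close>

lemma poly_to_fls_conv_poly: "poly_to_fls p = poly (map_poly fls_const p) fls_X_inv"
proof -
  have "degree (map_poly fls_const p) = degree p"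
    by (rule degree_map_poly) simp
  then show ?thesis
    unfolding poly_to_fls_def poly_altdef by (simp add: coeff_map_poly)
qed

lemma poly_to_fls_pCons: "poly_to_fls (pCons c p) = fls_const c + fls_X_inv * poly_to_fls p"
  by (simp add: poly_to_fls_conv_poly map_poly_pCons)

lemma poly_to_fls_0 [simp]: "poly_to_fls 0 = 0"
  by (simp add: poly_to_fls_conv_poly)

lemma poly_to_fls_const [simp]: "poly_to_fls [:c:] = fls_const c"
  by (simp add: poly_to_fls_pCons)

lemma poly_to_fls_1 [simp]: "poly_to_fls 1 = 1"
  using poly_to_fls_const[of 1] by (simp add: one_pCons)

lemma poly_to_fls_nth:
  "poly_to_fls p $$ n = (if n \<le> 0 then coeff p (nat (- n)) else 0)"
proof (induction p arbitrary: n)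
  case 0
  then show ?case by simp
next
  case (pCons c p)
  have shift: "(fls_X_inv * g) $$ n = g $$ (n + 1)" for g :: "'a fls"
    using fls_X_inv_power_times_conv_shift(1)[of 1 g] by simp
  show ?case
    by (auto simp: poly_to_fls_pCons shift pCons coeff_pCons split: nat.split)
      (simp_all add: nat_diff_distrib)
qed

lemma poly_to_fls_add: "poly_to_fls (p + q) = poly_to_fls p + poly_to_fls q"
  by (rule fls_eqI) (simp add: poly_to_fls_nth)

lemma poly_to_fls_diff: "poly_to_fls (p - q) = poly_to_fls p - poly_to_fls q"
  by (rule fls_eqI) (simp add: poly_to_fls_nth)

lemma poly_to_fls_uminus: "poly_to_fls (- p) = - poly_to_fls p"
  by (rule fls_eqI) (simp add: poly_to_fls_nth)

lemma poly_to_fls_smult: "poly_to_fls (smult c p) = fls_const c * poly_to_fls p"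
  by (rule fls_eqI) (simp add: poly_to_fls_nth)

lemma poly_to_fls_mult: "poly_to_fls (p * q) = poly_to_fls p * poly_to_fls q"
proof (induction p)
  case 0
  then show ?case by simp
next
  case (pCons c p)
  have "pCons c p * q = smult c q + pCons 0 (p * q)"
    by simp
  then show ?case
    using pCons by (simp add: poly_to_fls_add poly_to_fls_smult poly_to_fls_pCons algebra_simps)
qed

lemma poly_to_fls_monom: "poly_to_fls (monom c j) = fls_const c * fls_X_inv ^ j"
  by (induction j) (simp_all add: monom_Suc poly_to_fls_pCons monom_0 algebra_simps)

lemma poly_to_fls_eq_sum:
  assumes "degree p \<le> n"
  shows "poly_to_fls p = (\<Sum>j\<le>n. fls_const (coeff p j) * fls_X_inv ^ j)"
  unfolding poly_to_fls_def
  by (rule sum.mono_neutral_left) (use assms in \<open>auto simp: coeff_eq_0\<close>)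

lemma CARD_ge_2: "CARD('a::{field,finite}) \<ge> 2"
proof -
  have "card {0::'a, 1} \<le> CARD('a)"
    by (rule card_mono) auto
  then show ?thesis
    by simp
qed

definition val_ge :: "'a::zero fls \<Rightarrow> int \<Rightarrow> bool" where
  "val_ge x n \<longleftrightarrow> (\<forall>k<n. x $$ k = 0)"

lemma val_ge_iff: "val_ge x n \<longleftrightarrow> x = 0 \<or> n \<le> fls_subdegree x"
  unfolding val_ge_def
proof safe
  assume "\<forall>k<n. x $$ k = 0" "\<not> n \<le> fls_subdegree x"
  then show "x = 0"
    using fls_subdegree_geI[of x n] by auto
qed auto

lemma val_ge_0 [simp]: "val_ge 0 n"
  by (simp add: val_ge_def)

lemma val_ge_uminus [simp]: "val_ge (- x) n \<longleftrightarrow> val_ge x n"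
  by (simp add: val_ge_def)

lemma val_ge_add: "val_ge x n \<Longrightarrow> val_ge y n \<Longrightarrow> val_ge (x + y) n"
  by (simp add: val_ge_def)

lemma val_ge_diff: "val_ge x n \<Longrightarrow> val_ge y n \<Longrightarrow> val_ge (x - y) n"
  by (simp add: val_ge_def)

lemma val_ge_mono: "val_ge x n \<Longrightarrow> m \<le> n \<Longrightarrow> val_ge x m"
  by (simp add: val_ge_def)

lemma val_ge_mult:
  fixes x y :: "'a::semiring_no_zero_divisors fls"
  shows "val_ge x m \<Longrightarrow> val_ge y n \<Longrightarrow> val_ge (x * y) (m + n)"
  unfolding val_ge_iff by (cases "x = 0"; cases "y = 0") auto

lemma val_ge_power:
  fixes x :: "'a::{semiring_no_zero_divisors,semiring_1} fls"
  shows "val_ge x m \<Longrightarrow> val_ge (x ^ N) (int N * m)"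
proof (induction N)
  case 0
  then show ?case by (simp add: val_ge_def)
next
  case (Suc N)
  then show ?case
    using val_ge_mult[of x m "x ^ N" "int N * m"] by (simp add: algebra_simps)
qed

lemma val_ge_const: "val_ge (fls_const c) 0"
  by (simp add: val_ge_def)

lemma val_ge_X_inv_power: "val_ge (fls_X_inv ^ j) (- int j)"
  by (simp add: val_ge_def)

lemma val_ge_poly_to_fls: "val_ge (poly_to_fls p) (- int (degree p))"
  by (auto simp: val_ge_def poly_to_fls_nth coeff_eq_0)

lemma degree_le_if_val_ge:
  assumes "val_ge (poly_to_fls p) (- int m)"
  shows "degree p \<le> m"
proof (rule degree_le, intro allI impI)
  fix i assume "m < i"
  then show "coeff p i = 0"
    using assms poly_to_fls_nth[of p "- int i"] by (auto simp: val_ge_def)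
qed

text \<open>The polynomial part of \<open>x\<close> is its \<open>T\<close>-adic expansion down to \<open>T\<^sup>0\<close>.\<close>
lemma val_ge_poly_part:
  assumes "val_ge x (- int m)"
  obtains p y where "x = poly_to_fls p + y" "val_ge y 1" "degree p \<le> m"
proof
  define p where "p = fls_prpart x + [:x $$ 0:]"
  have coeff_p: "coeff p i = x $$ (- int i)" for i
    by (cases i) (auto simp: p_def)
  show "val_ge (x - poly_to_fls p) 1"
    by (auto simp: val_ge_def poly_to_fls_nth coeff_p)
  show "degree p \<le> m"
    by (rule degree_le) (use assms in \<open>auto simp: coeff_p val_ge_def\<close>)
qed simp

lemma absv_le_iff:
  fixes x :: "'a::{field,finite} fls"
  shows "absv x \<le> real CARD('a) powr (- of_int n) \<longleftrightarrow> val_ge x n"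
proof -
  have "real CARD('a) > 1"
    using CARD_ge_2[where 'a='a] by simp
  then show ?thesis
    by (cases "x = 0") (auto simp: absv_def val_ge_iff)
qed

lemma absv_less_iff:
  fixes x :: "'a::{field,finite} fls"
  shows "absv x < real CARD('a) powr (- of_int n) \<longleftrightarrow> val_ge x (n + 1)"
proof -
  have "real CARD('a) > 1"
    using CARD_ge_2[where 'a='a] by simp
  then show ?thesis
    by (cases "x = 0") (auto simp: absv_def val_ge_iff)
qed

lemma dist_A_less_iff:
  fixes x :: "'a::{field,finite} fls"
  shows "dist_A x < inverse (real CARD('a) ^ m)
           \<longleftrightarrow> (\<exists>\<mu>. val_ge (x - poly_to_fls \<mu>) (int m + 1))"
proof -
  have eps: "inverse (real CARD('a) ^ m) = real CARD('a) powr (- of_int (int m))"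
    using CARD_ge_2[where 'a='a] by (simp add: powr_minus powr_realpow)
  have bdd: "bdd_below ((\<lambda>a. absv (x - a)) ` A_set)"
    by (rule bdd_belowI[of _ 0]) (auto simp: absv_def)
  show ?thesis
  proof
    assume "dist_A x < inverse (real CARD('a) ^ m)"
    then have "Inf ((\<lambda>a. absv (x - a)) ` range poly_to_fls) < inverse (real CARD('a) ^ m)"
      unfolding dist_A_def A_set_def .
    from cInf_lessD[OF _ this] obtain \<mu> where "absv (x - poly_to_fls \<mu>) < inverse (real CARD('a) ^ m)"
      by blast
    then show "\<exists>\<mu>. val_ge (x - poly_to_fls \<mu>) (int m + 1)"
      unfolding eps absv_less_iff by blast
  next
    assume "\<exists>\<mu>. val_ge (x - poly_to_fls \<mu>) (int m + 1)"
    then obtain \<mu> where "absv (x - poly_to_fls \<mu>) < inverse (real CARD('a) ^ m)"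
      unfolding eps absv_less_iff by blast
    moreover have "dist_A x \<le> absv (x - poly_to_fls \<mu>)"
      unfolding dist_A_def by (rule cInf_lower[OF _ bdd]) (auto simp: A_set_def)
    ultimately show "dist_A x < inverse (real CARD('a) ^ m)"
      by linarith
  qed
qed

lemma mem_Lambda_iff:
  fixes f :: "'a::{field,finite} fls"
  shows "lam \<in> Lambda (inverse (real CARD('a) ^ m)) f
           \<longleftrightarrow> (\<exists>u v. lam = poly_to_fls v \<and> val_ge (poly_to_fls u + poly_to_fls v * f) (int m + 1))"
proof -
  have eq: "poly_to_fls v * f - poly_to_fls \<mu> = poly_to_fls (- \<mu>) + poly_to_fls v * f" for v \<mu>
    by (simp add: poly_to_fls_uminus)
  have "(\<exists>\<mu>. val_ge (poly_to_fls v * f - poly_to_fls \<mu>) n)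
      \<longleftrightarrow> (\<exists>u. val_ge (poly_to_fls u + poly_to_fls v * f) n)" for v n
  proof
    assume "\<exists>\<mu>. val_ge (poly_to_fls v * f - poly_to_fls \<mu>) n"
    then show "\<exists>u. val_ge (poly_to_fls u + poly_to_fls v * f) n"
      unfolding eq by blast
  next
    assume "\<exists>u. val_ge (poly_to_fls u + poly_to_fls v * f) n"
    then obtain u where "val_ge (poly_to_fls (- (- u)) + poly_to_fls v * f) n"
      by auto
    then show "\<exists>\<mu>. val_ge (poly_to_fls v * f - poly_to_fls \<mu>) n"
      unfolding eq[symmetric] by blast
  qed
  then show ?thesis
    unfolding Lambda_def A_set_def dist_A_less_iff by blast
qed

lemma hausdorff_dist_nonneg:
  assumes "S' \<noteq> {}"
  shows "0 \<le> hausdorff_dist S S'"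
proof -
  obtain y0 where y0: "y0 \<in> S'"
    using assms by auto
  have "0 \<le> (INF x\<in>S. ereal (absv (x - y0)))"
    by (rule INF_greatest) (simp add: absv_def)
  also have "\<dots> \<le> (SUP y\<in>S'. INF x\<in>S. ereal (absv (x - y)))"
    using y0 by (rule SUP_upper)
  finally show ?thesis
    unfolding hausdorff_dist_def by (rule order.trans) simp
qed

lemma hausdorff_dist_le:
  assumes "\<And>x. x \<in> S \<Longrightarrow> \<exists>y\<in>S'. absv (x - y) \<le> B"
    and "\<And>y. y \<in> S' \<Longrightarrow> \<exists>x\<in>S. absv (x - y) \<le> B"
  shows "hausdorff_dist S S' \<le> ereal B"
proof -
  have "(SUP x\<in>S. INF y\<in>S'. ereal (absv (x - y))) \<le> ereal B"
  proof (rule SUP_least)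
    fix x assume "x \<in> S"
    then obtain y where "y \<in> S'" "absv (x - y) \<le> B"
      using assms(1) by auto
    then show "(INF y\<in>S'. ereal (absv (x - y))) \<le> ereal B"
      by (intro INF_lower2) auto
  qed
  moreover have "(SUP y\<in>S'. INF x\<in>S. ereal (absv (x - y))) \<le> ereal B"
  proof (rule SUP_least)
    fix y assume "y \<in> S'"
    then obtain x where "x \<in> S" "absv (x - y) \<le> B"
      using assms(2) by auto
    then show "(INF x\<in>S. ereal (absv (x - y))) \<le> ereal B"
      by (intro INF_lower2) auto
  qed
  ultimately show ?thesis
    unfolding hausdorff_dist_def by simp
qed

lemma CARD_powr_minus_tendsto_0:
  "(\<lambda>N. ereal (real CARD('a::{field,finite}) powr - real N)) \<longlonglongrightarrow> 0"
proof -
  have q: "real CARD('a) > 1"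
    using CARD_ge_2[where 'a='a] by simp
  then have "(\<lambda>N. inverse (real CARD('a)) ^ N) \<longlonglongrightarrow> 0"
    by (intro LIMSEQ_realpow_zero) (auto simp: inverse_less_1_iff)
  then have "(\<lambda>N. real CARD('a) powr - real N) \<longlonglongrightarrow> 0"
    using q by (simp add: powr_minus powr_realpow power_inverse)
  then show ?thesis
    using tendsto_ereal[of _ 0] by (simp add: zero_ereal_def)
qed

lemma A_inf1_sum:
  "finite J \<Longrightarrow> (\<And>j. j \<in> J \<Longrightarrow> g j \<in> A_inf1 f d) \<Longrightarrow> (\<Sum>j\<in>J. g j) \<in> A_inf1 f d"
proof (induction J rule: finite_induct)
  case empty
  then show ?case
    using A_inf1.const[of 0] by simp
next
  case (insert j J)
  then show ?case
    by (simp add: A_inf1.add)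
qed

lemma ideal_a_subset_A_inf1:
  assumes "i < d"
  shows "ideal_a f d i \<subseteq> A_inf1 f d"
proof
  fix z assume "z \<in> ideal_a f d i"
  then obtain r where z: "z = (\<Sum>j\<le>i. r j * (f * fls_X_inv ^ j))" and r: "\<forall>j\<le>i. r j \<in> A_inf1 f d"
    unfolding ideal_a_def by blast
  have "f * fls_X_inv ^ j \<in> A_inf1 f d" if "j \<le> i" for j
    using that assms by (intro A_inf1.gen) simp
  then show "z \<in> A_inf1 f d"
    unfolding z using r by (intro A_inf1_sum) (auto intro: A_inf1.mult)
qed

lemma ideal_a_add:
  assumes "x \<in> ideal_a f d i" "y \<in> ideal_a f d i"
  shows "x + y \<in> ideal_a f d i"
proof -
  obtain r where x: "x = (\<Sum>j\<le>i. r j * (f * fls_X_inv ^ j))" "\<forall>j\<le>i. r j \<in> A_inf1 f d"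
    using assms(1) unfolding ideal_a_def by blast
  obtain s where y: "y = (\<Sum>j\<le>i. s j * (f * fls_X_inv ^ j))" "\<forall>j\<le>i. s j \<in> A_inf1 f d"
    using assms(2) unfolding ideal_a_def by blast
  have "x + y = (\<Sum>j\<le>i. (r j + s j) * (f * fls_X_inv ^ j))"
    unfolding x y by (simp add: sum.distrib distrib_right)
  then show ?thesis
    unfolding ideal_a_def using x(2) y(2) by (auto intro!: exI[of _ "\<lambda>j. r j + s j"] A_inf1.add)
qed

lemma A_inf1_times_in_ideal_a:
  assumes "z \<in> A_inf1 f d"
  shows "z * f \<in> ideal_a f d i"
proof -
  have "(\<Sum>j\<le>i. (if j = 0 then z else 0) * (f * fls_X_inv ^ j))
      = (\<Sum>j\<le>i. if j = 0 then z * f else 0)"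
    by (rule sum.cong) auto
  then have "z * f = (\<Sum>j\<le>i. (if j = 0 then z else 0) * (f * fls_X_inv ^ j))"
    by simp
  moreover have "\<forall>j\<le>i. (if j = 0 then z else 0) \<in> A_inf1 f d"
    using assms A_inf1.const[of 0 f d] by simp
  ultimately show ?thesis
    unfolding ideal_a_def by (intro CollectI exI[of _ "\<lambda>j. if j = 0 then z else 0"]) simp
qed

lemma poly_times_in_ideal_a:
  assumes "degree r \<le> i"
  shows "poly_to_fls r * f \<in> ideal_a f d i"
proof -
  have "poly_to_fls r * f = (\<Sum>j\<le>i. fls_const (coeff r j) * (f * fls_X_inv ^ j))"
    unfolding poly_to_fls_eq_sum[OF assms] sum_distrib_right by (simp add: ac_simps)
  then show ?thesis
    unfolding ideal_a_def by (auto intro: A_inf1.const)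
qed

lemma poly_times_in_A_inf1:
  assumes "degree r < d"
  shows "poly_to_fls r * f \<in> A_inf1 f d"
proof -
  have "poly_to_fls r * f \<in> ideal_a f d (d - 1)"
    using assms by (intro poly_times_in_ideal_a) simp
  moreover have "ideal_a f d (d - 1) \<subseteq> A_inf1 f d"
    using assms by (intro ideal_a_subset_A_inf1) simp
  ultimately show ?thesis
    by blast
qed

definition lin_comb :: "'a::{field,finite} fls \<Rightarrow> 'a poly \<Rightarrow> 'a poly \<Rightarrow> 'a fls" where
  "lin_comb g u v = poly_to_fls u + poly_to_fls v * g"

lemma lin_comb_add: "lin_comb g u v + lin_comb g u' v' = lin_comb g (u + u') (v + v')"
  by (simp add: lin_comb_def poly_to_fls_add algebra_simps)

lemma lin_comb_mult:
  assumes "g * g = poly_to_fls a * g + fls_const b"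
  shows "lin_comb g u v * lin_comb g u' v'
           = lin_comb g (u * u' + smult b (v * v')) (u * v' + u' * v + a * v * v')"
proof -
  have "lin_comb g u v * lin_comb g u' v'
      = poly_to_fls u * poly_to_fls u'
        + (poly_to_fls u * poly_to_fls v' + poly_to_fls u' * poly_to_fls v) * g
        + poly_to_fls v * poly_to_fls v' * (g * g)"
    by (simp add: lin_comb_def algebra_simps)
  then show ?thesis
    unfolding assms
    by (simp add: lin_comb_def poly_to_fls_add poly_to_fls_mult poly_to_fls_smult algebra_simps)
qed

text \<open>The inverse of a root is \<open>(g - a) / b\<close>.\<close>
lemma lin_comb_times_inverse:
  assumes "g * g = poly_to_fls a * g + fls_const b" "b \<noteq> 0"
  shows "lin_comb g u v * inverse g = lin_comb g (v - smult (1 / b) (a * u)) (smult (1 / b) u)"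
proof -
  have "lin_comb g (v - smult (1 / b) (a * u)) (smult (1 / b) u) * g
      = poly_to_fls v * g + fls_const (1 / b) * poly_to_fls u * (g * g - poly_to_fls a * g)"
    by (simp add: lin_comb_def poly_to_fls_diff poly_to_fls_smult poly_to_fls_mult algebra_simps)
  also have "\<dots> = lin_comb g u v"
    using assms by (simp add: lin_comb_def mult.assoc[symmetric])
  finally have *: "lin_comb g (v - smult (1 / b) (a * u)) (smult (1 / b) u) * g = lin_comb g u v" .
  have "g \<noteq> 0"
    using assms by auto
  then show ?thesis
    unfolding *[symmetric] by simp
qed

locale quadratic_unit =
  fixes a :: "'a::{field,finite} poly" and b :: 'a and f :: "'a fls"
  assumes monic: "lead_coeff a = 1"
    and degree_pos: "degree a \<ge> 1"
    and b_nonzero: "b \<noteq> 0"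
    and root: "f ^ 2 - poly_to_fls a * f - fls_const b = 0"
    and absv_f: "absv f = real CARD('a) ^ degree a"
begin

abbreviation "d \<equiv> degree a"

definition fconj :: "'a fls" where
  "fconj = poly_to_fls a - f"

lemma f_root: "f * f = poly_to_fls a * f + fls_const b"
  using root by (simp add: power2_eq_square algebra_simps)

lemma fconj_root: "fconj * fconj = poly_to_fls a * fconj + fls_const b"
  using f_root unfolding fconj_def by (simp add: algebra_simps)

lemma f_times_fconj: "f * fconj = - fls_const b"
  using f_root unfolding fconj_def by (simp add: algebra_simps)

lemma f_nonzero: "f \<noteq> 0"
  using f_times_fconj b_nonzero by auto

lemma fconj_nonzero: "fconj \<noteq> 0"
  using f_times_fconj b_nonzero by auto

lemma fls_subdegree_f: "fls_subdegree f = - int d"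
proof -
  have q: "real CARD('a) > 1"
    using CARD_ge_2[where 'a='a] by simp
  have "real CARD('a) powr (- of_int (fls_subdegree f)) = real CARD('a) powr (real d)"
    using absv_f f_nonzero q by (simp add: absv_def powr_realpow)
  then have "- of_int (fls_subdegree f) = real d"
    using q by (simp add: powr_inj)
  then show ?thesis
    by linarith
qed

lemma fls_subdegree_fconj: "fls_subdegree fconj = int d"
proof -
  have "fls_subdegree (f * fconj) = 0"
    using f_times_fconj by simp
  then show ?thesis
    using f_nonzero fconj_nonzero fls_subdegree_f by simp
qed

lemma val_ge_f: "val_ge f (- int d)"
  by (simp add: val_ge_iff fls_subdegree_f)

lemma val_ge_fconj: "val_ge fconj (int d)"
  by (simp add: val_ge_iff fls_subdegree_fconj)

lemma val_ge_inverse_f: "val_ge (inverse f) (int d)"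
  by (simp add: val_ge_iff fls_subdegree_f)

lemma val_ge_inverse_fconj: "val_ge (inverse fconj) (- int d)"
  by (simp add: val_ge_iff fls_subdegree_fconj)

lemma sqrtD_eq: "sqrtD f a = f - fconj"
proof (cases "CHAR('a) = 2")
  case True
  then have "(2::'a) = 0"
    by (metis of_nat_CHAR of_nat_numeral)
  then have "(2::'a fls) = 0"
    by (metis fls_const_0 fls_const_numeral)
  then have "poly_to_fls a = 2 * f - poly_to_fls a"
    by (metis add_diff_cancel_left' diff_0 mult_2 mult_zero_left)
  with True show ?thesis
    by (simp add: sqrtD_def fconj_def)
next
  case False
  then show ?thesis
    by (simp add: sqrtD_def fconj_def)
qed

text \<open>
  Using a relation avoids having
  to know that the coordinates \<open>u, v\<close> of \<open>x = u + v f\<close> are unique.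
\<close>
definition conj_pair :: "'a fls \<Rightarrow> 'a fls \<Rightarrow> bool" where
  "conj_pair x x' \<longleftrightarrow> (\<exists>u v. x = lin_comb f u v \<and> x' = lin_comb fconj u v)"

lemma conj_pair_lin_comb: "conj_pair (lin_comb f u v) (lin_comb fconj u v)"
  unfolding conj_pair_def by blast

lemma conj_pair_add: "conj_pair x x' \<Longrightarrow> conj_pair y y' \<Longrightarrow> conj_pair (x + y) (x' + y')"
  unfolding conj_pair_def by (metis lin_comb_add)

lemma conj_pair_mult: "conj_pair x x' \<Longrightarrow> conj_pair y y' \<Longrightarrow> conj_pair (x * y) (x' * y')"
  unfolding conj_pair_def by (metis lin_comb_mult f_root fconj_root)

lemma conj_pair_times_inverse: "conj_pair x x' \<Longrightarrow> conj_pair (x * inverse f) (x' * inverse fconj)"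
  unfolding conj_pair_def by (metis lin_comb_times_inverse f_root fconj_root b_nonzero)

lemma conj_pair_poly: "conj_pair (poly_to_fls p) (poly_to_fls p)"
  using conj_pair_lin_comb[of p 0] by (simp add: lin_comb_def)

lemma conj_pair_const: "conj_pair (fls_const c) (fls_const c)"
  using conj_pair_poly[of "[:c:]"] by simp

lemma conj_pair_f: "conj_pair f fconj"
  using conj_pair_lin_comb[of 0 1] by (simp add: lin_comb_def)

lemma conj_pair_swap: "conj_pair x x' \<Longrightarrow> conj_pair x' x"
proof -
  have "lin_comb fconj u v = lin_comb f (u + v * a) (- v)
      \<and> lin_comb f u v = lin_comb fconj (u + v * a) (- v)" for u v
    by (simp add: lin_comb_def fconj_def poly_to_fls_add poly_to_fls_mult poly_to_fls_uminus algebra_simps)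
  then show "conj_pair x x' \<Longrightarrow> conj_pair x' x"
    unfolding conj_pair_def by metis
qed

lemma conj_pair_uminus: "conj_pair x x' \<Longrightarrow> conj_pair (- x) (- x')"
  using conj_pair_mult[OF conj_pair_const[of "-1"]] by simp

lemma conj_pair_power: "conj_pair x x' \<Longrightarrow> conj_pair (x ^ N) (x' ^ N)"
  by (induction N) (use conj_pair_const[of 1] conj_pair_mult in auto)

lemma conj_pair_inverse_f_power: "conj_pair (inverse f ^ N) (inverse fconj ^ N)"
  using conj_pair_power[OF conj_pair_times_inverse[OF conj_pair_const[of 1]]] by simp

definition conj_ge :: "int \<Rightarrow> 'a fls set" where
  "conj_ge k = {x. \<exists>x'. conj_pair x x' \<and> val_ge x' k}"

lemma conj_ge_add: "x \<in> conj_ge k \<Longrightarrow> y \<in> conj_ge k \<Longrightarrow> x + y \<in> conj_ge k"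
  unfolding conj_ge_def using conj_pair_add val_ge_add by blast

lemma conj_ge_mult: "x \<in> conj_ge m \<Longrightarrow> y \<in> conj_ge n \<Longrightarrow> x * y \<in> conj_ge (m + n)"
  unfolding conj_ge_def using conj_pair_mult val_ge_mult by blast

lemma conj_ge_mono: "x \<in> conj_ge k \<Longrightarrow> m \<le> k \<Longrightarrow> x \<in> conj_ge m"
  unfolding conj_ge_def using val_ge_mono by blast

lemma const_in_conj_ge: "fls_const c \<in> conj_ge 0"
  unfolding conj_ge_def using conj_pair_const val_ge_const by blast

lemma zero_in_conj_ge: "0 \<in> conj_ge k"
  unfolding conj_ge_def using conj_pair_const[of 0] by auto

lemma conj_ge_sum:
  "finite J \<Longrightarrow> (\<And>j. j \<in> J \<Longrightarrow> g j \<in> conj_ge k) \<Longrightarrow> (\<Sum>j\<in>J. g j) \<in> conj_ge k"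
  by (induction J rule: finite_induct) (auto intro: conj_ge_add zero_in_conj_ge)

lemma generator_in_conj_ge: "f * fls_X_inv ^ j \<in> conj_ge (int d - int j)"
proof -
  have "conj_pair (f * fls_X_inv ^ j) (fconj * fls_X_inv ^ j)"
    using conj_pair_mult[OF conj_pair_f conj_pair_poly[of "monom 1 j"]]
    by (simp add: poly_to_fls_monom)
  moreover have "val_ge (fconj * fls_X_inv ^ j) (int d - int j)"
    using val_ge_mult[OF val_ge_fconj val_ge_X_inv_power[of j]] by simp
  ultimately show ?thesis
    unfolding conj_ge_def by blast
qed

lemma A_inf1_subset_conj_ge: "A_inf1 f d \<subseteq> conj_ge 0"
proof
  fix z assume "z \<in> A_inf1 f d"
  then show "z \<in> conj_ge 0"
  proof (induction rule: A_inf1.induct)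
    case (const c)
    then show ?case by (rule const_in_conj_ge)
  next
    case (gen j)
    then show ?case using generator_in_conj_ge[of j] conj_ge_mono by fastforce
  next
    case (add x y)
    then show ?case using conj_ge_add by blast
  next
    case (mult x y)
    then show ?case using conj_ge_mult by fastforce
  qed
qed

lemma ideal_a_subset_conj_ge:
  assumes "i < d"
  shows "ideal_a f d i \<subseteq> conj_ge (int d - int i)"
proof
  fix z assume "z \<in> ideal_a f d i"
  then obtain r where z: "z = (\<Sum>j\<le>i. r j * (f * fls_X_inv ^ j))" and r: "\<forall>j\<le>i. r j \<in> A_inf1 f d"
    unfolding ideal_a_def by blast
  have "r j * (f * fls_X_inv ^ j) \<in> conj_ge (int d - int i)" if "j \<le> i" for j
  proof -
    have "r j * (f * fls_X_inv ^ j) \<in> conj_ge (0 + (int d - int j))"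
      using r that A_inf1_subset_conj_ge by (intro conj_ge_mult generator_in_conj_ge) auto
    then show ?thesis
      using that by (auto elim: conj_ge_mono)
  qed
  then show "z \<in> conj_ge (int d - int i)"
    unfolding z by (intro conj_ge_sum) auto
qed

text \<open>
  The polynomial part \<open>p\<close> of \<open>f x\<close> has degree \<open>\<le> d - k\<close>; removing its multiple of \<open>a\<close>
  leaves \<open>-b r\<close> with \<open>deg r < d\<close>, and then \<open>f (x - c - r f\<^sup>*) = (f x - p) + c f\<^sup>*\<close>
  has positive valuation.
\<close>
lemma approx_by_fconj:
  assumes "val_ge x (int k)" "k \<le> d"
  obtains c r where "val_ge (x - fls_const c - poly_to_fls r * fconj) (int d)"
    and "degree r < d" and "0 < k \<longrightarrow> c = 0 \<and> degree r \<le> d - k"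
proof -
  have "val_ge (f * x) (- int (d - k))"
    using val_ge_mult[OF val_ge_f assms(1)] assms(2) by (simp add: of_nat_diff)
  then obtain p y where fx: "f * x = poly_to_fls p + y" and y: "val_ge y 1" and p: "degree p \<le> d - k"
    by (rule val_ge_poly_part)
  define c where "c = coeff p d"
  define r where "r = smult (1 / b) (smult c a - p)"
  have "degree (smult c a - p) \<le> d - 1"
  proof (rule degree_le, intro allI impI)
    fix i assume "d - 1 < i"
    then have "i = d \<or> d < i"
      by linarith
    then show "coeff (smult c a - p) i = 0"
      using monic p by (auto simp: c_def coeff_eq_0)
  qed
  then have "degree (smult c a - p) < d"
    using degree_pos by linarith
  then have r_deg: "degree r < d"
    unfolding r_def using b_nonzero by simp
  have r_deg_k: "0 < k \<longrightarrow> c = 0 \<and> degree r \<le> d - k"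
  proof
    assume "0 < k"
    then have "degree p < d"
      using p degree_pos by linarith
    then have "c = 0"
      by (simp add: c_def coeff_eq_0)
    then show "c = 0 \<and> degree r \<le> d - k"
      using p by (simp add: r_def)
  qed
  have br: "fls_const b * poly_to_fls r = fls_const c * poly_to_fls a - poly_to_fls p"
    using b_nonzero by (simp add: r_def poly_to_fls_smult poly_to_fls_diff mult.assoc[symmetric])
  have "f * (x - fls_const c - poly_to_fls r * fconj)
      = f * x - fls_const c * f - poly_to_fls r * (f * fconj)"
    by (simp add: algebra_simps)
  also have "\<dots> = f * x - fls_const c * f + fls_const b * poly_to_fls r"
    using f_times_fconj by simp
  also have "\<dots> = y + fls_const c * fconj"
    unfolding fx br fconj_def by (simp add: algebra_simps)
  finally have "x - fls_const c - poly_to_fls r * fconj = inverse f * (y + fls_const c * fconj)"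
    using f_nonzero by (simp add: field_simps)
  moreover have "val_ge (fls_const c * fconj) 1"
    by (rule val_ge_mono[OF val_ge_mult[OF val_ge_const val_ge_fconj]]) (use degree_pos in simp)
  then have "val_ge (y + fls_const c * fconj) 1"
    using y by (rule val_ge_add[rotated])
  ultimately have "val_ge (x - fls_const c - poly_to_fls r * fconj) (int d + 1)"
    using val_ge_mult[OF val_ge_inverse_f] by simp
  then have "val_ge (x - fls_const c - poly_to_fls r * fconj) (int d)"
    by (rule val_ge_mono) simp
  then show thesis
    using that r_deg r_deg_k by blast
qed

lemma conj_ge_descent:
  assumes "val_ge (lin_comb fconj u v) (int k)" "k \<le> d"
  obtains c r u1 v1
  where "lin_comb f u v = fls_const c + poly_to_fls r * f + lin_comb f u1 v1 * f"
    and "val_ge (lin_comb fconj u1 v1) 0" and "degree v1 \<le> degree u"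
    and "degree r < d" and "0 < k \<longrightarrow> c = 0 \<and> degree r \<le> d - k"
proof -
  obtain c r where small: "val_ge (lin_comb fconj u v - fls_const c - poly_to_fls r * fconj) (int d)"
    and r: "degree r < d" "0 < k \<longrightarrow> c = 0 \<and> degree r \<le> d - k"
    using approx_by_fconj[OF assms] by blast
  define u' where "u' = u - [:c:]"
  define v' where "v' = v - r"
  define u1 where "u1 = v' - smult (1 / b) (a * u')"
  define v1 where "v1 = smult (1 / b) u'"
  have quotients: "lin_comb f u' v' * inverse f = lin_comb f u1 v1"
    "lin_comb fconj u' v' * inverse fconj = lin_comb fconj u1 v1"
    unfolding u1_def v1_def using f_root fconj_root b_nonzero by (simp_all add: lin_comb_times_inverse)
  have "lin_comb fconj u' v' = lin_comb fconj u v - fls_const c - poly_to_fls r * fconj"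
    by (simp add: u'_def v'_def lin_comb_def poly_to_fls_diff algebra_simps)
  then have "val_ge (lin_comb fconj u1 v1) (int d + - int d)"
    using val_ge_mult[OF small val_ge_inverse_fconj] quotients(2) by simp
  moreover have "lin_comb f u v = fls_const c + poly_to_fls r * f + lin_comb f u1 v1 * f"
  proof -
    have "lin_comb f u1 v1 * f = lin_comb f u' v' * (inverse f * f)"
      using quotients(1) by (simp add: mult.assoc)
    also have "\<dots> = lin_comb f u' v'"
      using f_nonzero by simp
    finally show ?thesis
      by (simp add: u'_def v'_def lin_comb_def poly_to_fls_diff algebra_simps)
  qed
  moreover have "degree v1 \<le> degree u"
    using degree_diff_le[of u "degree u" "[:c:]"] b_nonzero by (simp add: v1_def u'_def)
  ultimately show thesis
    using that r by simp
qed

lemma lin_comb_f_in_A_inf1: "val_ge (lin_comb fconj u v) 0 \<Longrightarrow> lin_comb f u v \<in> A_inf1 f d"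
proof (induction "degree v" arbitrary: u v rule: less_induct)
  case less
  have "val_ge (poly_to_fls v * fconj) (- int (degree v) + int d)"
    by (rule val_ge_mult[OF val_ge_poly_to_fls val_ge_fconj])
  then have "val_ge (poly_to_fls v * fconj) (- int (degree v - d))"
    by (rule val_ge_mono) simp
  moreover have "val_ge (lin_comb fconj u v) (- int (degree v - d))"
    using less.prems by (rule val_ge_mono) simp
  ultimately have "val_ge (lin_comb fconj u v - poly_to_fls v * fconj) (- int (degree v - d))"
    by (intro val_ge_diff)
  then have deg_u: "degree u \<le> degree v - d"
    by (intro degree_le_if_val_ge) (simp add: lin_comb_def)
  show ?case
  proof (cases "degree v < d")
    case True
    then have "poly_to_fls u = fls_const (coeff u 0)"
      using deg_u by (simp add: poly_to_fls_def)
    then show ?thesis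
      unfolding lin_comb_def using True by (auto intro: A_inf1.add A_inf1.const poly_times_in_A_inf1)
  next
    case False
    have "val_ge (lin_comb fconj u v) (int 0)"
      using less.prems by simp
    then obtain c r u1 v1
      where split: "lin_comb f u v = fls_const c + poly_to_fls r * f + lin_comb f u1 v1 * f"
      and z: "val_ge (lin_comb fconj u1 v1) 0" "degree v1 \<le> degree u" and r: "degree r < d"
      by (rule conj_ge_descent[OF _ le0])
    have "degree v1 < degree v"
      using z(2) deg_u False degree_pos by linarith
    then have "lin_comb f u1 v1 \<in> A_inf1 f d"
      using less.hyps z(1) by blast
    moreover have "f \<in> A_inf1 f d"
      using A_inf1.gen[of 0 d f] degree_pos by simp
    ultimately show ?thesis
      unfolding split using r by (intro A_inf1.add A_inf1.mult A_inf1.const poly_times_in_A_inf1)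
  qed
qed

lemma conj_ge_subset_ideal_a:
  assumes "l < d"
  shows "conj_ge (int l + 1) \<subseteq> ideal_a f d (d - 1 - l)"
proof
  fix z assume "z \<in> conj_ge (int l + 1)"
  then obtain u v where z: "z = lin_comb f u v" and "val_ge (lin_comb fconj u v) (int l + 1)"
    unfolding conj_ge_def conj_pair_def by blast
  then have small: "val_ge (lin_comb fconj u v) (int (l + 1))"
    by (simp only: of_nat_add of_nat_1)
  have "l + 1 \<le> d"
    using assms by simp
  then obtain c r u1 v1
    where split: "lin_comb f u v = fls_const c + poly_to_fls r * f + lin_comb f u1 v1 * f"
    and z1: "val_ge (lin_comb fconj u1 v1) 0" and "0 < l + 1 \<longrightarrow> c = 0 \<and> degree r \<le> d - (l + 1)"
    by (rule conj_ge_descent[OF small])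
  then have r: "c = 0" "degree r \<le> d - (l + 1)"
    by simp_all
  have "poly_to_fls r * f \<in> ideal_a f d (d - 1 - l)"
    using r by (intro poly_times_in_ideal_a) simp
  moreover have "lin_comb f u1 v1 * f \<in> ideal_a f d (d - 1 - l)"
    using z1 by (intro A_inf1_times_in_ideal_a lin_comb_f_in_A_inf1)
  ultimately show "z \<in> ideal_a f d (d - 1 - l)"
    unfolding z split using r by (simp add: ideal_a_add)
qed

lemma ideal_a_eq_conj_ge:
  assumes "l < d"
  shows "ideal_a f d (d - 1 - l) = conj_ge (int l + 1)"
proof
  have "int d - int (d - 1 - l) = int l + 1" "d - 1 - l < d"
    using assms by auto
  then show "ideal_a f d (d - 1 - l) \<subseteq> conj_ge (int l + 1)"
    using ideal_a_subset_conj_ge[of "d - 1 - l"] by metis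
qed (rule conj_ge_subset_ideal_a[OF assms])

lemma scaled_sqrtD_approx:
  assumes "val_ge (lin_comb f u v) (int (d * N + l) + 1)"
  shows "val_ge (inverse f ^ N * sqrtD f a * poly_to_fls v + inverse f ^ N * lin_comb fconj u v) (int N)"
proof -
  have "inverse f ^ N * sqrtD f a * poly_to_fls v + inverse f ^ N * lin_comb fconj u v
      = inverse f ^ N * lin_comb f u v"
    by (simp add: sqrtD_eq lin_comb_def algebra_simps)
  moreover have "val_ge (inverse f ^ N * lin_comb f u v) (int N)"
  proof (rule val_ge_mono)
    show "val_ge (inverse f ^ N * lin_comb f u v) (int N * int d + (int (d * N + l) + 1))"
      by (rule val_ge_mult[OF val_ge_power[OF val_ge_inverse_f] assms])
    have "int N * 1 \<le> int N * int d"
      using degree_pos by (intro mult_left_mono) auto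
    then show "int N \<le> int N * int d + (int (d * N + l) + 1)"
      by simp
  qed
  ultimately show ?thesis
    by simp
qed

lemma scaled_Lambda_near_conj_ge:
  assumes "lam \<in> Lambda (inverse (real CARD('a) ^ (d * N + l))) f"
  shows "\<exists>w\<in>conj_ge (int l + 1). val_ge (inverse f ^ N * sqrtD f a * lam - w) (int N)"
proof -
  obtain u v where lam: "lam = poly_to_fls v" and small: "val_ge (lin_comb f u v) (int (d * N + l) + 1)"
    using assms unfolding mem_Lambda_iff lin_comb_def by blast
  define w where "w = - (inverse f ^ N * lin_comb fconj u v)"
  have "conj_pair w (- (inverse fconj ^ N * lin_comb f u v))"
    unfolding w_def
    by (intro conj_pair_uminus
        conj_pair_mult[OF conj_pair_inverse_f_power conj_pair_swap[OF conj_pair_lin_comb]])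
  moreover have "val_ge (inverse fconj ^ N * lin_comb f u v) (int N * - int d + (int (d * N + l) + 1))"
    by (rule val_ge_mult[OF val_ge_power[OF val_ge_inverse_fconj] small])
  ultimately have "w \<in> conj_ge (int l + 1)"
    unfolding conj_ge_def by (auto simp: algebra_simps)
  moreover have "val_ge (inverse f ^ N * sqrtD f a * lam - w) (int N)"
    using scaled_sqrtD_approx[OF small] by (simp add: lam w_def)
  ultimately show ?thesis
    by blast
qed

lemma conj_ge_near_scaled_Lambda:
  assumes "w \<in> conj_ge (int l + 1)"
  shows "\<exists>lam\<in>Lambda (inverse (real CARD('a) ^ (d * N + l))) f.
           val_ge (inverse f ^ N * sqrtD f a * lam - w) (int N)"
proof -
  obtain w' where pair: "conj_pair w w'" and w': "val_ge w' (int l + 1)"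
    using assms unfolding conj_ge_def by blast
  have "conj_pair (fconj ^ N * w') (f ^ N * w)"
    using pair
    by (rule conj_pair_mult[OF conj_pair_power[OF conj_pair_swap[OF conj_pair_f]] conj_pair_swap])
  then have "conj_pair (- (fconj ^ N * w')) (- (f ^ N * w))"
    by (rule conj_pair_uminus)
  then obtain u v where uv: "- (fconj ^ N * w') = lin_comb f u v" "- (f ^ N * w) = lin_comb fconj u v"
    unfolding conj_pair_def by blast
  have "val_ge (fconj ^ N * w') (int N * int d + (int l + 1))"
    by (rule val_ge_mult[OF val_ge_power[OF val_ge_fconj] w'])
  then have small: "val_ge (lin_comb f u v) (int (d * N + l) + 1)"
    unfolding uv[symmetric] by (simp add: ac_simps)
  then have "poly_to_fls v \<in> Lambda (inverse (real CARD('a) ^ (d * N + l))) f"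
    unfolding mem_Lambda_iff lin_comb_def by blast
  moreover have "w = - (inverse f ^ N * lin_comb fconj u v)"
    using f_nonzero unfolding uv[symmetric]
    by (simp add: mult.assoc[symmetric] power_mult_distrib[symmetric])
  ultimately show ?thesis
    using scaled_sqrtD_approx[OF small] by auto
qed

lemma hausdorff_dist_scaled_Lambda_le:
  "hausdorff_dist ((\<lambda>lam. inverse f ^ N * sqrtD f a * lam)
       ` Lambda (inverse (real CARD('a) ^ (d * N + l))) f) (conj_ge (int l + 1))
     \<le> ereal (real CARD('a) powr - real N)"
proof -
  have close: "absv x \<le> real CARD('a) powr - real N \<longleftrightarrow> val_ge x (int N)" for x :: "'a fls"
    using absv_le_iff[of x "int N"] by simp
  show ?thesis
  proof (rule hausdorff_dist_le)
    fix x assume "x \<in> (\<lambda>lam. inverse f ^ N * sqrtD f a * lam)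
        ` Lambda (inverse (real CARD('a) ^ (d * N + l))) f"
    then obtain lam where "lam \<in> Lambda (inverse (real CARD('a) ^ (d * N + l))) f"
      and x: "x = inverse f ^ N * sqrtD f a * lam"
      by blast
    from scaled_Lambda_near_conj_ge[OF this(1)]
    show "\<exists>y\<in>conj_ge (int l + 1). absv (x - y) \<le> real CARD('a) powr - real N"
      unfolding x close .
  next
    fix y assume "y \<in> conj_ge (int l + 1)"
    from conj_ge_near_scaled_Lambda[OF this, of N]
    show "\<exists>x\<in>(\<lambda>lam. inverse f ^ N * sqrtD f a * lam)
        ` Lambda (inverse (real CARD('a) ^ (d * N + l))) f.
          absv (x - y) \<le> real CARD('a) powr - real N"
      unfolding close by blast
  qed
qed

end

theorem proposition1:
  fixes a :: "'a::{field,finite} poly" and b :: 'a and f :: "'a fls" and l :: nat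
  assumes monic: "lead_coeff a = 1"
    and deg: "degree a \<ge> 1"
    and b: "b \<noteq> 0"
    and root: "f ^ 2 - poly_to_fls a * f - fls_const b = 0"
    and absf: "absv f = real CARD('a) ^ degree a"
    and notk: "f \<notin> k_set"
    and l: "l < degree a"
  shows "(\<lambda>N. hausdorff_dist
            ((\<lambda>lam. inverse f ^ N * sqrtD f a * lam)
               ` Lambda (inverse (real CARD('a) ^ (degree a * N + l))) f)
            (ideal_a f (degree a) (degree a - 1 - l)))
         \<longlonglongrightarrow> 0"
proof -
  interpret quadratic_unit a b f
    using monic deg b root absf by unfold_locales
  show ?thesis
    unfolding ideal_a_eq_conj_ge[OF l]
  proof (rule tendsto_sandwich[OF _ _ tendsto_const CARD_powr_minus_tendsto_0[where 'a='a]])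
    show "\<forall>\<^sub>F N in sequentially. 0 \<le> hausdorff_dist
        ((\<lambda>lam. inverse f ^ N * sqrtD f a * lam) ` Lambda (inverse (real CARD('a) ^ (d * N + l))) f)
        (conj_ge (int l + 1))"
      using zero_in_conj_ge by (intro always_eventually allI hausdorff_dist_nonneg) blast
  qed (intro always_eventually allI hausdorff_dist_scaled_Lambda_le)
qed

end
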